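(* Let $(A^1,B^1)$ be an $n_1\times m_1$ bimatrix game, $(A^2,B^2)$ an $n_2\times m_2$ bimatrix game, $K$ a real number with $K>|c|$ for every entry $c$ of $A^1,B^1,A^2,B^2$, and let $(A,B)$ be the sum game $(A^1,B^1)+(A^2,B^2)$ via $K$. If $(x,y)$ is a Nash equilibrium of $(A,B)$, then $(x^1,y^1)$ defined by $x^1_i=x_i/\sum_{l=1}^{n_1}x_l$ for $1\le i\le n_1$ and $y^1_j=y_j/\sum_{l=1}^{m_1}y_l$ for $1\le j\le m_1$ is well-defined and is a Nash equilibrium of $(A^1,B^1)$.
   Context: An $n\times m$ bimatrix game $(A,B)$ consists of two real $n\times m$ matrices. A mixed strategy of the row player is a probability vector $x\in\Delta_n=\{x\in\mathbb{R}^n_{\ge 0}:\sum_i x_i=1\}$, of the column player $y\in\Delta_m$; the expected payoffs are $x^TAy$ (row player) and $x^TBy$ (column player). $(x,y)$ is a Nash equilibrium if $x^TAy\ge \hat x^TAy$ for all $\hat x\in\Delta_n$ and $x^TBy\ge x^TB\hat y$ for all $\hat y\in\Delta_m$. The sum game $(A^1,B^1)+(A^2,B^2)$ via $K$ is the $(n_1+n_2)\times(m_1+m_2)$ game $(A,B)$ with $A_{ij}=A^1_{ij}$, $B_{ij}=B^1_{ij}$ if $i\le n_1,j\le m_1$; $A_{ij}=A^2_{i-n_1,j-m_1}$, $B_{ij}=B^2_{i-n_1,j-m_1}$ if $i>n_1,j>m_1$; and $A_{ij}=K$, $B_{ij}=-K$ otherwise. *)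

theory Defs
  imports Main "HOL.Real"
begin

text \<open>Matrices are functions nat => nat => real, vectors nat => real, with explicit
  dimensions; indices are 0-based (row i < n, column j < m). Only entries
  within the dimensions are ever inspected.\<close>

definition simplex :: "nat \<Rightarrow> (nat \<Rightarrow> real) set" where
  "simplex n = {x. (\<forall>i<n. 0 \<le> x i) \<and> (\<Sum>i<n. x i) = 1}"

definition payoff :: "nat \<Rightarrow> nat \<Rightarrow> (nat \<Rightarrow> nat \<Rightarrow> real) \<Rightarrow> (nat \<Rightarrow> real) \<Rightarrow> (nat \<Rightarrow> real) \<Rightarrow> real" where
  "payoff n m M x y = (\<Sum>i<n. \<Sum>j<m. x i * M i j * y j)"

definition nash_eq :: "nat \<Rightarrow> nat \<Rightarrow> (nat \<Rightarrow> nat \<Rightarrow> real) \<Rightarrow> (nat \<Rightarrow> nat \<Rightarrow> real)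
    \<Rightarrow> (nat \<Rightarrow> real) \<Rightarrow> (nat \<Rightarrow> real) \<Rightarrow> bool" where
  "nash_eq n m A B x y \<longleftrightarrow> x \<in> simplex n \<and> y \<in> simplex m \<and>
     (\<forall>x'\<in>simplex n. payoff n m A x' y \<le> payoff n m A x y) \<and>
     (\<forall>y'\<in>simplex m. payoff n m B x y' \<le> payoff n m B x y)"

definition sum_mat :: "nat \<Rightarrow> nat \<Rightarrow> (nat \<Rightarrow> nat \<Rightarrow> real) \<Rightarrow> (nat \<Rightarrow> nat \<Rightarrow> real) \<Rightarrow> real
    \<Rightarrow> nat \<Rightarrow> nat \<Rightarrow> real" where
  "sum_mat n1 m1 M1 M2 c i j =
     (if i < n1 \<and> j < m1 then M1 i j
      else if n1 \<le> i \<and> m1 \<le> j then M2 (i - n1) (j - m1)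
      else c)"

end

theory Submission
  imports Defs
begin

text \<open>Since K dominates every entry, an off-diagonal outcome is the best possible one for the
  row player and the worst possible one for the column player. If the row player ignored the
  first block, the column player would answer only in the second block (as B2 > -K), and then
  the row player would prefer the first block after all (as K > A2). If the column player
  ignored the first block, the row player would answer only in the first block (as K > A2),
  and then the column player would prefer the first block (as B1 > -K). So both players put
  positive weight on the first block. A deviation of the row player that keeps its weights on
  the second block and its total weight on the first block changes only the A1-part of its
  payoff, hence the normalised restriction of x is optimal against that of y in the first
  game; the column player is handled by transposition.\<close>

lemma sum_lessThan_add_nat: "sum f {..<m + n} = sum f {..<m} + sum f {m..<m + (n::nat)}"
  using sum.atLeastLessThan_concat[of 0 m "m + n" f] by (simp add: atLeast0LessThan)

lemma weighted_mean_less: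
  fixes f w :: "'a \<Rightarrow> real"
  assumes "finite S" "\<And>j. j \<in> S \<Longrightarrow> 0 \<le> w j" "sum w S = 1" "\<And>j. j \<in> S \<Longrightarrow> f j < c"
  shows "(\<Sum>j\<in>S. f j * w j) < c"
proof -
  obtain k where k: "k \<in> S" "w k > 0"
    using assms(2,3) sum_nonneg_eq_0_iff[OF assms(1)] by (metis order_le_less zero_neq_one)
  have "(\<Sum>j\<in>S. f j * w j) < (\<Sum>j\<in>S. c * w j)"
  proof (rule sum_strict_mono_ex1[OF assms(1)])
    show "\<forall>j\<in>S. f j * w j \<le> c * w j"
      using assms(2,4) by (auto intro: mult_right_mono less_imp_le)
    show "\<exists>j\<in>S. f j * w j < c * w j"
      using k assms(4) by (auto intro!: bexI[of _ k])
  qed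
  also have "\<dots> = c"
    by (simp add: sum_distrib_left[symmetric] assms(3))
  finally show ?thesis .
qed

lemma weighted_mean_greater:
  fixes f w :: "'a \<Rightarrow> real"
  assumes "finite S" "\<And>j. j \<in> S \<Longrightarrow> 0 \<le> w j" "sum w S = 1" "\<And>j. j \<in> S \<Longrightarrow> c < f j"
  shows "c < (\<Sum>j\<in>S. f j * w j)"
  using weighted_mean_less[of S w "\<lambda>j. - f j" "- c"] assms by (simp add: sum_negf)

lemma sum_pos_or_all_zero:
  fixes x :: "nat \<Rightarrow> real"
  assumes "\<forall>i<n. 0 \<le> x i"
  shows "0 < (\<Sum>i<n. x i) \<or> (\<forall>i<n. x i = 0)"
  using assms sum_nonneg[of "{..<n}" x] sum_nonneg_eq_0_iff[of "{..<n}" x] by force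

lemma normalized_in_simplex:
  assumes "\<And>i. i < n \<Longrightarrow> 0 \<le> x i" "0 < (\<Sum>l<n. x l)"
  shows "(\<lambda>i. x i / (\<Sum>l<n. x l)) \<in> simplex n"
  using assms by (simp add: simplex_def sum_divide_distrib[symmetric])

lemma payoff_eq_sum_rows: "payoff n m M x y = (\<Sum>i<n. x i * (\<Sum>j<m. M i j * y j))"
  by (simp add: payoff_def sum_distrib_left mult.assoc)

lemma payoff_transpose: "payoff n m M x y = payoff m n (\<lambda>j i. M i j) y x"
  unfolding payoff_def by (subst sum.swap) (simp add: mult_ac)

lemma payoff_divide_left: "payoff n m M (\<lambda>i. x i / a) y = payoff n m M x y / a"
  by (simp add: payoff_def sum_divide_distrib)

lemma payoff_divide_right: "payoff n m M x (\<lambda>j. y j / b) = payoff n m M x y / b"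
  by (simp add: payoff_def sum_divide_distrib)

lemma sum_mat_transpose:
  "(\<lambda>j i. sum_mat n1 m1 M1 M2 c i j) = sum_mat m1 n1 (\<lambda>j i. M1 i j) (\<lambda>j i. M2 i j) c"
  by (auto simp: sum_mat_def fun_eq_iff)

definition row_best_response ::
    "nat \<Rightarrow> nat \<Rightarrow> (nat \<Rightarrow> nat \<Rightarrow> real) \<Rightarrow> (nat \<Rightarrow> real) \<Rightarrow> (nat \<Rightarrow> real) \<Rightarrow> bool" where
  "row_best_response n m A x y \<longleftrightarrow>
     x \<in> simplex n \<and> (\<forall>x'\<in>simplex n. payoff n m A x' y \<le> payoff n m A x y)"

lemma nash_eq_iff_best_responses:
  "nash_eq n m A B x y \<longleftrightarrow>
     row_best_response n m A x y \<and> row_best_response m n (\<lambda>j i. B i j) y x"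
proof -
  have "payoff n m B x y' = payoff m n (\<lambda>j i. B i j) y' x" for y'
    by (rule payoff_transpose)
  then show ?thesis
    unfolding nash_eq_def row_best_response_def by auto
qed

text \<open>Moving the weight of a strictly worse pure strategy to a better one is a profitable deviation.\<close>
lemma best_response_support:
  assumes best: "row_best_response n m A x y" and "i < n" "k < n"
    and worse: "(\<Sum>j<m. A i j * y j) < (\<Sum>j<m. A k j * y j)"
  shows "x i = 0"
proof (rule ccontr)
  define r where "r l = (\<Sum>j<m. A l j * y j)" for l
  assume "x i \<noteq> 0"
  moreover have "0 \<le> x i"
    using best \<open>i < n\<close> by (simp add: row_best_response_def simplex_def)
  ultimately have pos: "0 < x i" by simp
  from worse have "k \<noteq> i" by auto
  define x' where "x' l = x l + (if l = k then x i else 0) - (if l = i then x i else 0)" for l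
  have "x' \<in> simplex n"
    using best \<open>i < n\<close> \<open>k < n\<close> \<open>k \<noteq> i\<close> pos
    unfolding row_best_response_def simplex_def x'_def by (auto simp: sum.distrib sum_subtractf)
  with best have "(\<Sum>l<n. x' l * r l) \<le> (\<Sum>l<n. x l * r l)"
    by (simp add: row_best_response_def payoff_eq_sum_rows r_def)
  moreover have "(\<Sum>l<n. x' l * r l) = (\<Sum>l<n. x l * r l) + x i * (r k - r i)"
    using \<open>i < n\<close> \<open>k < n\<close> unfolding x'_def
    by (simp add: algebra_simps sum.distrib sum_subtractf if_distrib[where f="\<lambda>a. _ * a"]
        cong: if_cong)
  ultimately have "x i * (r k - r i) \<le> 0" by simp
  moreover have "0 < x i * (r k - r i)"
    using pos worse by (simp add: r_def)
  ultimately show False by simp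
qed

locale sum_game_row_player =
  fixes n1 m1 n2 m2 :: nat and M1 M2 :: "nat \<Rightarrow> nat \<Rightarrow> real" and c :: real
    and x y :: "nat \<Rightarrow> real"
  assumes best: "row_best_response (n1 + n2) (m1 + m2) (sum_mat n1 m1 M1 M2 c) x y"
    and y_simplex: "y \<in> simplex (m1 + m2)"
begin

definition row_value :: "nat \<Rightarrow> real" where
  "row_value i = (\<Sum>j<m1 + m2. sum_mat n1 m1 M1 M2 c i j * y j)"

lemma x_simplex: "x \<in> simplex (n1 + n2)"
  using best by (simp add: row_best_response_def)

lemma y_block_sums: "(\<Sum>j<m1. y j) + (\<Sum>j\<in>{m1..<m1 + m2}. y j) = 1"
  using y_simplex by (simp add: simplex_def sum_lessThan_add_nat)

lemma row_value_block1:
  "i < n1 \<Longrightarrow> row_value i = (\<Sum>j<m1. M1 i j * y j) + c * (\<Sum>j\<in>{m1..<m1 + m2}. y j)"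
  by (simp add: row_value_def sum_lessThan_add_nat sum_mat_def sum_distrib_left)

lemma row_value_block2:
  "n1 \<le> i \<Longrightarrow>
     row_value i = c * (\<Sum>j<m1. y j) + (\<Sum>j\<in>{m1..<m1 + m2}. M2 (i - n1) (j - m1) * y j)"
  by (simp add: row_value_def sum_lessThan_add_nat sum_mat_def sum_distrib_left)

lemma unused_if_worse:
  "i < n1 + n2 \<Longrightarrow> k < n1 + n2 \<Longrightarrow> row_value i < row_value k \<Longrightarrow> x i = 0"
  using best_response_support[OF best] by (simp add: row_value_def)

lemma block2_unused_if_col_block1_unused:
  assumes "\<forall>j<m1. y j = 0" "\<forall>i<n2. \<forall>j<m2. M2 i j < c" "1 \<le> n1" "n1 \<le> i" "i < n1 + n2"
  shows "x i = 0"
proof -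
  have y2: "(\<Sum>j\<in>{m1..<m1 + m2}. y j) = 1"
    using y_block_sums assms(1) by simp
  have "row_value i = (\<Sum>j\<in>{m1..<m1 + m2}. M2 (i - n1) (j - m1) * y j)"
    using assms(1,4) by (simp add: row_value_block2)
  also have "\<dots> < c"
    using assms(2,4,5) y2 y_simplex by (intro weighted_mean_less) (auto simp: simplex_def)
  also have "c = row_value 0"
    using assms(1,3) by (simp add: row_value_block1 y2)
  finally show ?thesis
    using unused_if_worse[of i 0] assms(3,5) by simp
qed

lemma block2_unused_if_col_block2_unused:
  assumes "\<forall>j\<in>{m1..<m1 + m2}. y j = 0" "\<forall>i<n1. \<forall>j<m1. c < M1 i j" "1 \<le> n1"
    "n1 \<le> i" "i < n1 + n2"
  shows "x i = 0"
proof -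
  have y1: "(\<Sum>j<m1. y j) = 1"
    using y_block_sums assms(1) by simp
  have "row_value i = c"
    using assms(1,4) by (simp add: row_value_block2 y1)
  also have "c < (\<Sum>j<m1. M1 0 j * y j)"
    using assms(2,3) y1 y_simplex by (intro weighted_mean_greater) (auto simp: simplex_def)
  also have "\<dots> = row_value 0"
    using assms(1,3) by (simp add: row_value_block1)
  finally show ?thesis
    using unused_if_worse[of i 0] assms(3,5) by simp
qed

lemma block1_unused_if_col_block1_unused:
  assumes "\<forall>j<m1. y j = 0" "\<forall>i<n2. \<forall>j<m2. c < M2 i j" "1 \<le> n2" "i < n1"
  shows "x i = 0"
proof -
  have y2: "(\<Sum>j\<in>{m1..<m1 + m2}. y j) = 1"
    using y_block_sums assms(1) by simp
  have "row_value i = c"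
    using assms(1,4) by (simp add: row_value_block1 y2)
  also have "c < (\<Sum>j\<in>{m1..<m1 + m2}. M2 0 (j - m1) * y j)"
    using assms(2,3) y2 y_simplex by (intro weighted_mean_greater) (auto simp: simplex_def)
  also have "\<dots> = row_value n1"
    using assms(1) by (simp add: row_value_block2)
  finally show ?thesis
    using unused_if_worse[of i n1] assms(3,4) by simp
qed

text \<open>Deviation to X x' on the first block and x on the second, with X the first block's
  total weight under x: its off-diagonal payoff is the same as that of x.\<close>
lemma scaled_block1_deviation:
  assumes "x' \<in> simplex n1"
  shows "(\<Sum>l<n1. x l) * payoff n1 m1 M1 x' y \<le> payoff n1 m1 M1 x y"
proof -
  define X where "X = (\<Sum>l<n1. x l)"
  define Y2 where "Y2 = (\<Sum>j\<in>{m1..<m1 + m2}. y j)"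
  define x'' where "x'' l = (if l < n1 then X * x' l else x l)" for l
  have x'_sum: "(\<Sum>i<n1. x' i) = 1"
    using assms by (simp add: simplex_def)
  have block1_value: "(\<Sum>i<n1. z i * row_value i) = payoff n1 m1 M1 z y + c * Y2 * (\<Sum>i<n1. z i)"
    for z
  proof -
    have "(\<Sum>i<n1. z i * row_value i) = (\<Sum>i<n1. z i * (\<Sum>j<m1. M1 i j * y j) + c * Y2 * z i)"
      by (intro sum.cong) (simp_all add: row_value_block1 Y2_def algebra_simps)
    then show ?thesis
      by (simp add: sum.distrib sum_distrib_left payoff_eq_sum_rows)
  qed
  have restrict: "(\<Sum>i<n1. x'' i * f i) = X * (\<Sum>i<n1. x' i * f i)" for f
    by (auto simp: x''_def sum_distrib_left mult.assoc intro!: sum.cong)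
  have "x'' \<in> simplex (n1 + n2)"
    using x_simplex assms unfolding simplex_def x''_def X_def
    by (auto simp: sum_lessThan_add_nat sum_distrib_left[symmetric]
        intro!: mult_nonneg_nonneg sum_nonneg)
  then have "(\<Sum>i<n1 + n2. x'' i * row_value i) \<le> (\<Sum>i<n1 + n2. x i * row_value i)"
    using best by (simp add: row_best_response_def payoff_eq_sum_rows row_value_def)
  then have "(\<Sum>i<n1. x'' i * row_value i) \<le> (\<Sum>i<n1. x i * row_value i)"
    by (simp add: sum_lessThan_add_nat x''_def)
  moreover have "(\<Sum>i<n1. x'' i * row_value i) = X * payoff n1 m1 M1 x' y + c * Y2 * X"
    using block1_value[of x''] restrict[of "\<lambda>i. \<Sum>j<m1. M1 i j * y j"] restrict[of "\<lambda>_. 1"]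
    by (simp add: payoff_eq_sum_rows x'_sum)
  moreover have "(\<Sum>i<n1. x i * row_value i) = payoff n1 m1 M1 x y + c * Y2 * X"
    by (simp add: block1_value X_def)
  ultimately show ?thesis
    by (simp add: X_def)
qed

lemma normalized_block1_best_response:
  assumes "0 < (\<Sum>l<n1. x l)" "0 < (\<Sum>l<m1. y l)"
  shows "row_best_response n1 m1 M1 (\<lambda>i. x i / (\<Sum>l<n1. x l)) (\<lambda>j. y j / (\<Sum>l<m1. y l))"
  unfolding row_best_response_def
proof (intro conjI ballI)
  show "(\<lambda>i. x i / (\<Sum>l<n1. x l)) \<in> simplex n1"
    using x_simplex assms(1) by (intro normalized_in_simplex) (auto simp: simplex_def)
  fix x' assume "x' \<in> simplex n1"
  then have "payoff n1 m1 M1 x' y \<le> payoff n1 m1 M1 x y / (\<Sum>l<n1. x l)"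
    using scaled_block1_deviation assms(1) by (simp add: field_simps)
  then have "payoff n1 m1 M1 x' y / (\<Sum>l<m1. y l)
      \<le> payoff n1 m1 M1 x y / (\<Sum>l<n1. x l) / (\<Sum>l<m1. y l)"
    by (rule divide_right_mono) (use assms(2) in simp)
  then show "payoff n1 m1 M1 x' (\<lambda>j. y j / (\<Sum>l<m1. y l))
      \<le> payoff n1 m1 M1 (\<lambda>i. x i / (\<Sum>l<n1. x l)) (\<lambda>j. y j / (\<Sum>l<m1. y l))"
    by (simp add: payoff_divide_left payoff_divide_right mult.commute)
qed

end

lemma sum_game_equilibrium_uses_block1:
  assumes row: "sum_game_row_player n1 m1 n2 m2 A1 A2 K x y"
    and col: "sum_game_row_player m1 n1 m2 n2 (\<lambda>j i. B1 i j) (\<lambda>j i. B2 i j) (- K) y x"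
    and "1 \<le> n1" "1 \<le> m1" "1 \<le> m2"
    and A2: "\<forall>i<n2. \<forall>j<m2. A2 i j < K"
    and B1: "\<forall>i<n1. \<forall>j<m1. - K < B1 i j" and B2: "\<forall>i<n2. \<forall>j<m2. - K < B2 i j"
  shows "0 < (\<Sum>l<n1. x l) \<and> 0 < (\<Sum>l<m1. y l)"
proof -
  interpret R: sum_game_row_player n1 m1 n2 m2 A1 A2 K x y by (rule row)
  interpret C: sum_game_row_player m1 n1 m2 n2 "\<lambda>j i. B1 i j" "\<lambda>j i. B2 i j" "- K" y x by (rule col)
  have x_block2_unused: "\<forall>i\<in>{n1..<n1 + n2}. x i = 0" if "\<forall>j<m1. y j = 0"
    using R.block2_unused_if_col_block1_unused[OF that A2 \<open>1 \<le> n1\<close>] by auto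
  have "0 < (\<Sum>l<n1. x l)"
  proof -
    have "\<not> (\<forall>i<n1. x i = 0)"
    proof
      assume x1: "\<forall>i<n1. x i = 0"
      then have "\<forall>j<m1. y j = 0"
        using C.block1_unused_if_col_block1_unused[OF x1 _ \<open>1 \<le> m2\<close>] B2 by auto
      then show False
        using x1 x_block2_unused R.x_simplex by (simp add: simplex_def sum_lessThan_add_nat)
    qed
    then show ?thesis
      using sum_pos_or_all_zero[of n1 x] R.x_simplex by (auto simp: simplex_def)
  qed
  moreover have "0 < (\<Sum>l<m1. y l)"
  proof -
    have "\<not> (\<forall>j<m1. y j = 0)"
    proof
      assume y1: "\<forall>j<m1. y j = 0"
      then have "\<forall>j\<in>{m1..<m1 + m2}. y j = 0"
        using C.block2_unused_if_col_block2_unused[OF x_block2_unused[OF y1] _ \<open>1 \<le> m1\<close>] B1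
        by auto
      then show False
        using y1 C.x_simplex by (simp add: simplex_def sum_lessThan_add_nat)
    qed
    then show ?thesis
      using sum_pos_or_all_zero[of m1 y] C.x_simplex by (auto simp: simplex_def)
  qed
  ultimately show ?thesis ..
qed

theorem theorem6:
  fixes n1 m1 n2 m2 :: nat and A1 B1 A2 B2 :: "nat \<Rightarrow> nat \<Rightarrow> real" and K :: real
    and x y :: "nat \<Rightarrow> real"
  assumes "n1 \<ge> 1" "m1 \<ge> 1" "n2 \<ge> 1" "m2 \<ge> 1"
    and "\<forall>i<n1. \<forall>j<m1. \<bar>A1 i j\<bar> < K \<and> \<bar>B1 i j\<bar> < K"
    and "\<forall>i<n2. \<forall>j<m2. \<bar>A2 i j\<bar> < K \<and> \<bar>B2 i j\<bar> < K"
    and "nash_eq (n1 + n2) (m1 + m2) (sum_mat n1 m1 A1 A2 K) (sum_mat n1 m1 B1 B2 (- K)) x y"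
  shows "(\<Sum>l<n1. x l) \<noteq> 0 \<and> (\<Sum>l<m1. y l) \<noteq> 0 \<and>
         nash_eq n1 m1 A1 B1 (\<lambda>i. x i / (\<Sum>l<n1. x l)) (\<lambda>j. y j / (\<Sum>l<m1. y l))"
proof -
  have rowA: "row_best_response (n1 + n2) (m1 + m2) (sum_mat n1 m1 A1 A2 K) x y"
    and colB: "row_best_response (m1 + m2) (n1 + n2)
                 (sum_mat m1 n1 (\<lambda>j i. B1 i j) (\<lambda>j i. B2 i j) (- K)) y x"
    using assms(7) by (simp_all add: nash_eq_iff_best_responses sum_mat_transpose)
  have row: "sum_game_row_player n1 m1 n2 m2 A1 A2 K x y"
    and col: "sum_game_row_player m1 n1 m2 n2 (\<lambda>j i. B1 i j) (\<lambda>j i. B2 i j) (- K) y x"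
    using rowA colB by (simp_all add: sum_game_row_player_def row_best_response_def)
  have "0 < (\<Sum>l<n1. x l) \<and> 0 < (\<Sum>l<m1. y l)"
    using assms(5,6) by (intro sum_game_equilibrium_uses_block1[OF row col assms(1,2,4)]) fastforce+
  then show ?thesis
    using sum_game_row_player.normalized_block1_best_response[OF row]
      sum_game_row_player.normalized_block1_best_response[OF col]
    by (simp add: nash_eq_iff_best_responses)
qed

end
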